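(* Consider Algorithm PDFPM (described in the context) applied to $\min_x F(x)$, and let $\bar{x}^k$ be the point computed in Step 2 at some iteration $k$ with current parameter $\sigma_k$. Suppose Assumptions A1, A2 and A3 (described in the context) hold. If $\sigma_k\|\bar{x}^k-x^k\|\ge\epsilon$, then for every $j\in\mathcal{J}$, $$F_j(\bar{x}^k)\le F_j(x^k)-\Big(\frac{\sigma_k-5L_j-\overline{B}}{2}\Big)\|s^k\|^2+\frac{4^{\beta_j}n^{\frac{1-\beta_j}{2}}M_j+M_j}{\beta_j+1}\|s^k\|^{\beta_j+1},$$ where $s^k=\bar{x}^k-x^k$.
   Context: Setting: $m,n\ge1$, $\mathcal{J}=\{1,\dots,m\}$, $F=(F_1,\dots,F_m)$ with $F_j=f_j+h_j$, where $f_j:\mathbb{R}^n\to\mathbb{R}$ is differentiable and $h_j:\mathbb{R}^n\to\mathbb{R}\cup\{+\infty\}$ is convex. For each $j$ a map $g_{f_j}:\mathbb{R}^n\times[0,1]\to\mathbb{R}^n$ is given with $\lim_{\lambda\to0}g_{f_j}(x,\lambda)=\nabla f_j(x)$ (a gradient approximation, e.g. finite differences). $\|\cdot\|$ is the Euclidean norm (spectral norm for matrices). Algorithm PDFPM: choose $x^0\in\mathbb{R}^n$, $\alpha,\epsilon\in(0,1)$, $\sigma_0\ge1$, symmetric positive semidefinite $B_j^0\in\mathbb{R}^{n\times n}$; set $k=0$. Step 1: choose $0<\lambda_k\le \epsilon/(\sigma_k\sqrt n)$ and compute $g_{f_j}(x^k,\lambda_k)$ for each $j$. Step 2: let $\bar{x}^k$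 be the (unique) minimizer of $\Phi_{x^k}(x)+\frac{\sigma_k}{2}\|x-x^k\|^2$, where $\Phi_{x^k}(x)=\max_{j\in\mathcal{J}}[\langle g_{f_j}(x^k,\lambda_k)+\frac12B_j^k(x-x^k),x-x^k\rangle+h_j(x)-h_j(x^k)]$. Step 3: if $\sigma_k\|\bar{x}^k-x^k\|\ge\epsilon$ go to Step 4; otherwise stop. Step 4: if $F_j(\bar{x}^k)\le F_j(x^k)-\frac{\alpha\epsilon^2}{2\sigma_k}$ for all $j\in\mathcal{J}$, set $x^{k+1}=\bar{x}^k$, $\sigma_{k+1}=\sigma_k$, choose symmetric positive semidefinite $B_j^{k+1}$, set $k\leftarrow k+1$ and go to Step 1; otherwise replace $\sigma_k$ by $2\sigma_k$ and go to Step 1 (same $k$). Assumption A1: there is $\overline{B}\ge0$ with $\|B_j^k\|\le\overline{B}$ for all iterations $k$ and all $j\in\mathcal{J}$. Assumption A2: for each $j$ there are $L_j,M_j>0$ and $\beta_j\in(0,1]$ with $f_j(y)\le f_j(x)+\langle\nabla f_j(x),y-x\rangle+\frac{L_j}{2}\|y-x\|^2+\frac{M_j}{\beta_j+1}\|y-x\|^{\beta_j+1}$ for all $x,y\in\mathbb{R}^n$. Assumption A3: with the same $L_j,M_j,\beta_j$, $\|\nabla f_j(x)-g_{f_j}(x,\lambda)\|\le\lambda\frac{\sqrt n L_j}{2}+\sqrt n\frac{M_j}{\beta_j+1}\lambda^{\beta_j}$ for all $x$ and all $\lambda\in(0,1]$. *)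

theory Defs
  imports "HOL-Analysis.Analysis" "HOL-Library.Extended_Real"
begin

definition convex_ereal_fun :: "('a::real_vector \<Rightarrow> ereal) \<Rightarrow> bool" where
  "convex_ereal_fun h \<longleftrightarrow> convex {(x, r::real). h x \<le> ereal r}"

definition Phi ::
  "nat \<Rightarrow> (nat \<Rightarrow> real^'n) \<Rightarrow> (nat \<Rightarrow> real^'n^'n) \<Rightarrow> (nat \<Rightarrow> real^'n \<Rightarrow> ereal)
     \<Rightarrow> real^'n \<Rightarrow> real^'n \<Rightarrow> ereal" where
  "Phi m gk Bk h xk x =
     Max ((\<lambda>j. ereal ((gk j + (1/2) *\<^sub>R (Bk j *v (x - xk))) \<bullet> (x - xk)) + h j x - h j xk)
          ` {1..m})"

end

theory Submission
  imports Defs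
begin

text \<open>Comparing the proximal point xbar with the trivial candidate xk in the minimisation of
  Step 2 gives, for every j, the model decrease
  g_j . s + h_j(xbar) - h_j(xk) + sigma/2 |s|^2 <= 0, since B_j is positive semidefinite.
  The step-size rule lam <= eps/(sigma sqrt n) together with sigma |s| >= eps yields
  lam sqrt n <= |s|, so by A3 the gradient error contributes at most
  L/2 |s|^2 + n^((1-beta)/2) M/(beta+1) |s|^(beta+1) on top of the bound A2.
  Adding up gives the claim with sigma/2 - L in place of (sigma - 5L - Bbar)/2 and without the
  factor 4^beta.\<close>

lemma Phi_ge_term:
  assumes "j \<in> {1..m}"
  shows "ereal ((gk j + (1/2) *\<^sub>R (Bk j *v (x - xk))) \<bullet> (x - xk)) + h j x - h j xk
           \<le> Phi m gk Bk h xk x"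
  unfolding Phi_def by (rule Max_ge) (use assms in auto)

lemma Phi_self_eq_0:
  assumes "m \<ge> 1" and "\<forall>j\<in>{1..m}. \<bar>h j xk\<bar> \<noteq> \<infinity>"
  shows "Phi m gk Bk h xk xk = 0"
proof -
  have "(\<lambda>j. ereal ((gk j + (1/2) *\<^sub>R (Bk j *v (xk - xk))) \<bullet> (xk - xk))
               + h j xk - h j xk) ` {1..m} = {0}"
    using assms by (force simp: ereal_x_minus_x)
  then show ?thesis
    unfolding Phi_def by simp
qed

lemma prox_step_model_decrease:
  assumes "m \<ge> 1" and "\<forall>i\<in>{1..m}. \<bar>h i xk\<bar> \<noteq> \<infinity>" and j: "j \<in> {1..m}"
    and psd: "\<And>v. v \<bullet> (Bk j *v v) \<ge> 0"
    and min: "Phi m gk Bk h xk xbar + ereal (\<sigma> / 2 * (norm (xbar - xk))\<^sup>2)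
                \<le> Phi m gk Bk h xk xk"
  shows "ereal (gk j \<bullet> (xbar - xk) + \<sigma> / 2 * (norm (xbar - xk))\<^sup>2) + h j xbar \<le> h j xk"
proof -
  define s where "s = xbar - xk"
  define q where "q = (gk j + (1/2) *\<^sub>R (Bk j *v s)) \<bullet> s"
  obtain b where b: "h j xk = ereal b"
    using assms(2) j by (cases "h j xk") force+
  have "q \<ge> gk j \<bullet> s"
    using psd[of s] unfolding q_def by (simp add: inner_add_left inner_commute[of s])
  moreover have "ereal q + h j xbar - h j xk + ereal (\<sigma> / 2 * (norm s)\<^sup>2) \<le> 0"
  proof -
    have "ereal q + h j xbar - h j xk \<le> Phi m gk Bk h xk xbar"
      using Phi_ge_term[OF j] unfolding q_def s_def .
    then have "ereal q + h j xbar - h j xk + ereal (\<sigma> / 2 * (norm s)\<^sup>2)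
                 \<le> Phi m gk Bk h xk xbar + ereal (\<sigma> / 2 * (norm s)\<^sup>2)"
      by (rule add_right_mono)
    also have "\<dots> \<le> 0"
      using min Phi_self_eq_0[of m h xk gk Bk, OF assms(1,2)] unfolding s_def by simp
    finally show ?thesis .
  qed
  ultimately show ?thesis
    unfolding s_def b by (cases "h j xbar") auto
qed

lemma gradient_error_inner_le:
  fixes e s :: "'a::real_inner"
  assumes err: "norm e \<le> l * sqrt n * L / 2 + sqrt n * M / (\<beta> + 1) * l powr \<beta>"
    and l: "0 < l" "l * sqrt n \<le> norm s"
    and n: "1 \<le> n" and L: "0 \<le> L" and M: "0 \<le> M" and \<beta>: "0 < \<beta>"
  shows "e \<bullet> s \<le> L / 2 * (norm s)\<^sup>2
                 + n powr ((1 - \<beta>) / 2) * M / (\<beta> + 1) * norm s powr (\<beta> + 1)"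
proof -
  define d where "d = norm s"
  have sqrt_n: "1 \<le> sqrt n"
    using n by simp
  have "0 < l * sqrt n"
    using l sqrt_n by simp
  with l have d: "0 < d"
    unfolding d_def by linarith
  have l_pow: "l powr \<beta> \<le> (d / sqrt n) powr \<beta>"
    using l sqrt_n \<beta> unfolding d_def by (intro powr_mono2) (auto simp: pos_le_divide_eq)
  have scale: "sqrt n * (d / sqrt n) powr \<beta> * d = n powr ((1 - \<beta>) / 2) * d powr (\<beta> + 1)"
  proof -
    have root: "sqrt n / sqrt n powr \<beta> = n powr ((1 - \<beta>) / 2)"
      using n by (simp add: powr_half_sqrt[symmetric] powr_powr powr_diff[symmetric] diff_divide_distrib)
    have pow: "d powr \<beta> * d = d powr (\<beta> + 1)"
      using d by (simp add: powr_add)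
    have "sqrt n * (d / sqrt n) powr \<beta> * d = (sqrt n / sqrt n powr \<beta>) * (d powr \<beta> * d)"
      using d by (simp add: powr_divide)
    then show ?thesis
      unfolding root pow .
  qed
  have "e \<bullet> s \<le> (l * sqrt n * L / 2 + sqrt n * M / (\<beta> + 1) * l powr \<beta>) * d"
    using norm_cauchy_schwarz[of e s] err mult_right_mono[OF err, of d] d
    unfolding d_def by linarith
  also have "\<dots> = (l * sqrt n) * d * (L / 2) + M / (\<beta> + 1) * (sqrt n * l powr \<beta> * d)"
    by (simp add: algebra_simps)
  also have "\<dots> \<le> d * d * (L / 2) + M / (\<beta> + 1) * (sqrt n * (d / sqrt n) powr \<beta> * d)"
    using l l_pow d L M \<beta> sqrt_n unfolding d_def
    by (intro add_mono mult_right_mono mult_left_mono) auto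
  also have "\<dots> = L / 2 * d\<^sup>2 + n powr ((1 - \<beta>) / 2) * M / (\<beta> + 1) * d powr (\<beta> + 1)"
    unfolding scale by (simp add: power2_eq_square mult_ac)
  finally show ?thesis
    unfolding d_def .
qed

lemma descent_with_inexact_gradient:
  fixes f :: "'a::real_inner \<Rightarrow> real"
  assumes descent: "f y \<le> f x + Df \<bullet> (y - x) + L / 2 * (norm (y - x))\<^sup>2
                      + M / (\<beta> + 1) * norm (y - x) powr (\<beta> + 1)"
    and err: "norm (Df - g) \<le> l * sqrt n * L / 2 + sqrt n * M / (\<beta> + 1) * l powr \<beta>"
    and l: "0 < l" "l * sqrt n \<le> norm (y - x)"
    and n: "1 \<le> n" and L: "0 \<le> L" and M: "0 \<le> M" and \<beta>: "0 < \<beta>"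
  shows "f y \<le> f x + g \<bullet> (y - x) + L * (norm (y - x))\<^sup>2
               + (n powr ((1 - \<beta>) / 2) * M + M) / (\<beta> + 1) * norm (y - x) powr (\<beta> + 1)"
proof -
  have "Df \<bullet> (y - x) = g \<bullet> (y - x) + (Df - g) \<bullet> (y - x)"
    by (simp add: inner_diff_left)
  with descent gradient_error_inner_le[OF err l n L M \<beta>] show ?thesis
    by (simp add: add_divide_distrib distrib_right)
qed

lemma finite_difference_step_bounds:
  assumes lam: "lam \<le> \<epsilon> / (\<sigma> * sqrt n)"
    and \<epsilon>: "\<epsilon> < 1" "\<epsilon> \<le> \<sigma> * d" and \<sigma>: "1 \<le> \<sigma>" and n: "1 \<le> n"
  shows "lam * sqrt n \<le> d" and "lam \<le> 1"
proof -
  have sqrt_n: "1 \<le> sqrt n"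
    using n by simp
  have denom: "1 \<le> \<sigma> * sqrt n"
    using mult_mono[OF \<sigma> sqrt_n] \<sigma> by simp
  have "lam \<le> \<sigma> * d / (\<sigma> * sqrt n)"
    using lam divide_right_mono[OF \<epsilon>(2), of "\<sigma> * sqrt n"] denom by linarith
  then show "lam * sqrt n \<le> d"
    using \<sigma> sqrt_n by (simp add: pos_le_divide_eq)
  have "\<epsilon> / (\<sigma> * sqrt n) \<le> 1"
    using denom \<epsilon>(1) by (simp add: divide_le_eq_1)
  then show "lam \<le> 1"
    using lam by linarith
qed

lemma descent_bound_mono_constants:
  fixes d p :: real
  assumes "u \<le> w - (\<sigma> / 2 - L) * d\<^sup>2 + (C * M + M) / (\<beta> + 1) * p"
    and "0 \<le> L" "0 \<le> Bbar" "0 \<le> C" "0 \<le> M" "0 < \<beta>" "0 \<le> p"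
  shows "u \<le> w - (\<sigma> - 5 * L - Bbar) / 2 * d\<^sup>2 + (4 powr \<beta> * C * M + M) / (\<beta> + 1) * p"
proof -
  have "C * M \<le> 4 powr \<beta> * C * M"
    using mult_right_mono[OF ge_one_powr_ge_zero[of 4 \<beta>], of "C * M"] assms(4-6)
    by (simp add: mult.assoc)
  then have "(C * M + M) / (\<beta> + 1) * p \<le> (4 powr \<beta> * C * M + M) / (\<beta> + 1) * p"
    using assms(6,7) by (intro mult_right_mono divide_right_mono) auto
  moreover have "(\<sigma> / 2 - L) * d\<^sup>2 \<ge> (\<sigma> - 5 * L - Bbar) / 2 * d\<^sup>2"
    using assms(2,3) by (intro mult_right_mono) auto
  ultimately show ?thesis
    using assms(1) by linarith
qed

theorem lemma3:
  fixes m :: nat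
    and f :: "nat \<Rightarrow> real^'n \<Rightarrow> real"
    and gradf :: "nat \<Rightarrow> real^'n \<Rightarrow> real^'n"
    and h :: "nat \<Rightarrow> real^'n \<Rightarrow> ereal"
    and g :: "nat \<Rightarrow> real^'n \<Rightarrow> real \<Rightarrow> real^'n"
    and L M \<beta> :: "nat \<Rightarrow> real"
    and Bk :: "nat \<Rightarrow> real^'n^'n"
    and Bbar \<epsilon> \<sigma> lam :: real
    and xk xbar :: "real^'n"
  assumes m_pos: "m \<ge> 1"
    and grad: "\<And>j x. j \<in> {1..m} \<Longrightarrow> GDERIV (f j) x :> gradf j x"
    and h_convex: "\<And>j. j \<in> {1..m} \<Longrightarrow> convex_ereal_fun (h j)"
    and h_no_minf: "\<And>j x. j \<in> {1..m} \<Longrightarrow> h j x \<noteq> -\<infinity>"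
    and g_approx: "\<And>j x. j \<in> {1..m} \<Longrightarrow> ((\<lambda>l. g j x l) \<longlongrightarrow> gradf j x) (at_right 0)"
    and eps: "0 < \<epsilon>" "\<epsilon> < 1"
    and sigma: "\<sigma> \<ge> 1"
    and lam: "0 < lam" "lam \<le> \<epsilon> / (\<sigma> * sqrt (real CARD('n)))"
    and xk_dom: "\<And>j. j \<in> {1..m} \<Longrightarrow> h j xk \<noteq> \<infinity>"
    and B_sym: "\<And>j. j \<in> {1..m} \<Longrightarrow> transpose (Bk j) = Bk j"
    and B_psd: "\<And>j v. j \<in> {1..m} \<Longrightarrow> v \<bullet> (Bk j *v v) \<ge> 0"
    and A1: "Bbar \<ge> 0" "\<And>j. j \<in> {1..m} \<Longrightarrow> onorm (\<lambda>v. Bk j *v v) \<le> Bbar"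
    and A2_par: "\<And>j. j \<in> {1..m} \<Longrightarrow> L j > 0 \<and> M j > 0 \<and> 0 < \<beta> j \<and> \<beta> j \<le> 1"
    and A2: "\<And>j x y. j \<in> {1..m} \<Longrightarrow>
               f j y \<le> f j x + gradf j x \<bullet> (y - x) + L j / 2 * (norm (y - x))\<^sup>2
                       + M j / (\<beta> j + 1) * norm (y - x) powr (\<beta> j + 1)"
    and A3: "\<And>j x l. j \<in> {1..m} \<Longrightarrow> 0 < l \<Longrightarrow> l \<le> 1 \<Longrightarrow>
               norm (gradf j x - g j x l)
                 \<le> l * sqrt (real CARD('n)) * L j / 2
                   + sqrt (real CARD('n)) * M j / (\<beta> j + 1) * l powr \<beta> j"
    and xbar_min: "\<And>y. Phi m (\<lambda>j. g j xk lam) Bk h xk xbar + ereal (\<sigma> / 2 * (norm (xbar - xk))\<^sup>2)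
                      \<le> Phi m (\<lambda>j. g j xk lam) Bk h xk y + ereal (\<sigma> / 2 * (norm (y - xk))\<^sup>2)"
    and step3: "\<sigma> * norm (xbar - xk) \<ge> \<epsilon>"
  shows "\<forall>j\<in>{1..m}.
           ereal (f j xbar) + h j xbar
             \<le> ereal (f j xk) + h j xk
                - ereal ((\<sigma> - 5 * L j - Bbar) / 2 * (norm (xbar - xk))\<^sup>2)
                + ereal ((4 powr \<beta> j * real CARD('n) powr ((1 - \<beta> j) / 2) * M j + M j)
                          / (\<beta> j + 1) * norm (xbar - xk) powr (\<beta> j + 1))"
proof
  fix j assume j: "j \<in> {1..m}"
  define s where "s = xbar - xk"
  define n where "n = real CARD('n)"
  define C where "C = n powr ((1 - \<beta> j) / 2)"
  have n: "1 \<le> n"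
    unfolding n_def by simp
  have par: "0 < L j" "0 < M j" "0 < \<beta> j"
    using A2_par[OF j] by auto
  have h_xk_finite: "\<forall>i\<in>{1..m}. \<bar>h i xk\<bar> \<noteq> \<infinity>"
    using xk_dom h_no_minf by auto
  then obtain b where b: "h j xk = ereal b"
    using j by (cases "h j xk") force+
  have model: "ereal (g j xk lam \<bullet> s + \<sigma> / 2 * (norm s)\<^sup>2) + h j xbar \<le> h j xk"
    using prox_step_model_decrease[of m h xk j Bk "\<lambda>i. g i xk lam" xbar \<sigma>,
        OF m_pos h_xk_finite j B_psd[OF j]] xbar_min[of xk]
    unfolding s_def by simp
  then obtain a where a: "h j xbar = ereal a"
    using b h_no_minf[OF j] by (cases "h j xbar") auto
  have lam_step: "lam * sqrt n \<le> norm s" "lam \<le> 1"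
    using finite_difference_step_bounds[OF lam(2) eps(2) step3 sigma] n
    unfolding s_def n_def by auto
  have descent: "f j xbar \<le> f j xk + g j xk lam \<bullet> s + L j * (norm s)\<^sup>2
                   + (C * M j + M j) / (\<beta> j + 1) * norm s powr (\<beta> j + 1)"
    using descent_with_inexact_gradient[OF A2[OF j, where x = xk and y = xbar]
        A3[OF j lam(1) lam_step(2), of xk]] lam(1) lam_step(1) n par
    unfolding s_def C_def n_def by simp
  have "f j xbar + a \<le> f j xk + b - (\<sigma> / 2 - L j) * (norm s)\<^sup>2
                          + (C * M j + M j) / (\<beta> j + 1) * norm s powr (\<beta> j + 1)"
    using descent model a b by (simp add: algebra_simps)
  then have "f j xbar + a \<le> f j xk + b - (\<sigma> - 5 * L j - Bbar) / 2 * (norm s)\<^sup>2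
                     + (4 powr \<beta> j * C * M j + M j) / (\<beta> j + 1) * norm s powr (\<beta> j + 1)"
    using par A1(1) unfolding C_def by (intro descent_bound_mono_constants) auto
  then show "ereal (f j xbar) + h j xbar
               \<le> ereal (f j xk) + h j xk
                  - ereal ((\<sigma> - 5 * L j - Bbar) / 2 * (norm (xbar - xk))\<^sup>2)
                  + ereal ((4 powr \<beta> j * real CARD('n) powr ((1 - \<beta> j) / 2) * M j + M j)
                            / (\<beta> j + 1) * norm (xbar - xk) powr (\<beta> j + 1))"
    using a b unfolding s_def C_def n_def by simp
qed

end
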